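(* Let $n,k$ be integers with $2\le k\le n$. Every $A\in\mathcal{S}^{n,k}$ has at most $n-k$ negative eigenvalues (counted with multiplicity).
   Context: For integers $2\le k\le n$, the $k$-PSD closure $\mathcal{S}^{n,k}$ is the set of all $n\times n$ real symmetric matrices all of whose $k\times k$ principal submatrices are positive semidefinite. *)

theory Defs
  imports "Jordan_Normal_Form.Char_Poly" "Jordan_Normal_Form.DL_Submatrix"
begin

definition psd :: "real mat \<Rightarrow> bool" where
  "psd B \<longleftrightarrow> (\<exists>m. B \<in> carrier_mat m m) \<and> transpose_mat B = B \<and>
     (\<forall>v \<in> carrier_vec (dim_row B). v \<bullet> (B *\<^sub>v v) \<ge> 0)"

definition k_psd_closure :: "nat \<Rightarrow> nat \<Rightarrow> real mat set" where
  "k_psd_closure n k = {A. A \<in> carrier_mat n n \<and> transpose_mat A = A \<and>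
     (\<forall>I. I \<subseteq> {..<n} \<and> card I = k \<longrightarrow> psd (submatrix A I I))}"

definition num_neg_eigenvalues :: "real mat \<Rightarrow> nat" where
  "num_neg_eigenvalues A =
     (\<Sum>a\<in>{a::real. a < 0 \<and> poly (char_poly A) a = 0}. order a (char_poly A))"

end

theory Submission
  imports Defs "Jordan_Normal_Form.Schur_Decomposition" "Jordan_Normal_Form.Matrix_Kernel"
    "HOL-Computational_Algebra.Fundamental_Theorem_Algebra"
begin

text \<open>Diagonalise \<open>A\<close> orthogonally, \<open>P\<^sup>T A P = D\<close>; the negative eigenvalues of \<open>A\<close>, counted with
multiplicity, are the negative diagonal entries of \<open>D\<close>. If there were more than \<open>n - k\<close> of them,
the corresponding columns of \<open>P\<close> would span a space of dimension greater than \<open>n - k\<close>, which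
meets the \<open>k\<close>-dimensional space of vectors vanishing outside the first \<open>k\<close> coordinates in some
\<open>v \<noteq> 0\<close>. Then \<open>v\<^sup>T A v < 0\<close>, although \<open>v\<^sup>T A v\<close> is a value of the quadratic form of the
leading \<open>k \<times> k\<close> principal submatrix, which is positive semidefinite. The argument works for every
\<open>k \<le> n\<close>.

The orthogonal diagonalisation is proved by the usual induction on \<open>n\<close>: the eigenvalues of a
real symmetric matrix are real, and conjugating by an orthogonal matrix whose first column is a
unit eigenvector splits off a \<open>1 \<times> 1\<close> block.\<close>

section \<open>Root multiplicities of a split polynomial\<close>

lemma order_prod_linear_factors:
  "Polynomial.order (a::'a::idom) (\<Prod>x\<leftarrow>xs. [:-x, 1:]) = length (filter ((=) a) xs)"
proof (induction xs)
  case (Cons x xs)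
  have nonzero: "(\<Prod>x\<leftarrow>ys. [:-x, 1:]) \<noteq> (0::'a poly)" for ys
    by (subst prod_list_zero_iff) auto
  have "Polynomial.order a (\<Prod>x\<leftarrow>x # xs. [:-x, 1:]) = Polynomial.order a [:-x, 1:] + Polynomial.order a (\<Prod>x\<leftarrow>xs. [:-x, 1:])"
    unfolding list.map prod_list.Cons by (rule order_mult) (use nonzero[of "x # xs"] in simp)
  also have "Polynomial.order a [:-x, 1:] = (if a = x then 1 else 0)"
    using order_power_n_n[of x 1] order_0I[of "[:-x, 1:]" a] by auto
  finally show ?case using Cons by simp
qed simp

lemma sum_order_roots_prod_linear_factors:
  fixes xs :: "'a::idom list"
  shows "(\<Sum>a\<in>{a. P a \<and> poly (\<Prod>x\<leftarrow>xs. [:-x, 1:]) a = 0}. Polynomial.order a (\<Prod>x\<leftarrow>xs. [:-x, 1:]))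
     = card {i. i < length xs \<and> P (xs ! i)}"
proof -
  have roots: "{a. P a \<and> poly (\<Prod>x\<leftarrow>xs. [:-x, 1:]) a = 0} = {a \<in> set xs. P a}"
    by (auto simp: poly_prod_list prod_list_zero_iff)
  have "(\<Sum>a\<in>{a \<in> set xs. P a}. Polynomial.order a (\<Prod>x\<leftarrow>xs. [:-x, 1:]))
      = (\<Sum>a\<in>{a \<in> set xs. P a}. card {i. i < length xs \<and> xs ! i = a})"
    unfolding order_prod_linear_factors length_filter_conv_card
    by (intro sum.cong refl arg_cong[where f = card]) auto
  also have "\<dots> = card (\<Union>a\<in>{a \<in> set xs. P a}. {i. i < length xs \<and> xs ! i = a})"
    by (rule card_UN_disjoint[symmetric]) auto
  also have "(\<Union>a\<in>{a \<in> set xs. P a}. {i. i < length xs \<and> xs ! i = a}) = {i. i < length xs \<and> P (xs ! i)}"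
    by auto
  finally show ?thesis unfolding roots .
qed

lemma num_neg_eigenvalues_similar_diagonal:
  assumes "similar_mat A D" "D \<in> carrier_mat n n" "diagonal_mat D"
  shows "num_neg_eigenvalues A = card {i. i < n \<and> D $$ (i, i) < 0}"
proof -
  have "upper_triangular D" using assms(2,3) by (auto simp: diagonal_mat_def upper_triangular_def)
  then have "char_poly A = (\<Prod>a\<leftarrow>diag_mat D. [:-a, 1:])"
    using char_poly_similar[OF assms(1)] char_poly_upper_triangular[OF assms(2)] by simp
  then have "num_neg_eigenvalues A = card {i. i < length (diag_mat D) \<and> diag_mat D ! i < 0}"
    unfolding num_neg_eigenvalues_def by (simp only: sum_order_roots_prod_linear_factors)
  also have "\<dots> = card {i. i < n \<and> D $$ (i, i) < 0}"
    using assms(2) by (auto simp: diag_mat_def intro!: arg_cong[where f = card])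
  finally show ?thesis .
qed

section \<open>Orthogonal and block diagonal matrices\<close>

definition orthogonal_mats :: "nat \<Rightarrow> 'a::field mat set" where
  "orthogonal_mats n = {P \<in> carrier_mat n n. transpose_mat P * P = 1\<^sub>m n}"

lemma orthogonal_matsD:
  assumes "P \<in> orthogonal_mats n"
  shows "P \<in> carrier_mat n n" "transpose_mat P * P = 1\<^sub>m n" "P * transpose_mat P = 1\<^sub>m n"
  using assms mat_mult_left_right_inverse[of "transpose_mat P" n P] unfolding orthogonal_mats_def by auto

lemma one_mat_orthogonal: "1\<^sub>m n \<in> orthogonal_mats n"
  unfolding orthogonal_mats_def by simp

lemma orthogonal_mats_mult:
  assumes P: "P \<in> orthogonal_mats n" and Q: "Q \<in> orthogonal_mats n"
  shows "P * Q \<in> orthogonal_mats n"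
proof -
  note P' = orthogonal_matsD[OF P] and Q' = orthogonal_matsD[OF Q]
  have "transpose_mat (P * Q) * (P * Q) = transpose_mat Q * (transpose_mat P * P) * Q"
    using P'(1) Q'(1) by (simp add: transpose_mult assoc_mult_mat[of _ n n _ n _ n])
  then show ?thesis
    using P'(1,2) Q'(1,2) unfolding orthogonal_mats_def by simp
qed

lemma orthogonal_congruence_similar:
  assumes P: "P \<in> orthogonal_mats n" and A: "A \<in> carrier_mat n n"
  shows "similar_mat A (transpose_mat P * A * P)"
proof -
  note P' = orthogonal_matsD[OF P]
  have "P * (transpose_mat P * A * P) * transpose_mat P = (P * transpose_mat P) * A * (P * transpose_mat P)"
    using P'(1) A by (simp add: assoc_mult_mat[of _ n n _ n _ n])
  then have "A = P * (transpose_mat P * A * P) * transpose_mat P"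
    using P'(3) A by simp
  then have "similar_mat_wit A (transpose_mat P * A * P) P (transpose_mat P)"
    using P' A unfolding similar_mat_wit_def by auto
  then show ?thesis unfolding similar_mat_def by blast
qed

lemma congruence_preserves_sym:
  fixes A P :: "'a::comm_semiring_0 mat"
  assumes "A \<in> carrier_mat n n" "P \<in> carrier_mat n m" "transpose_mat A = A"
  shows "transpose_mat (transpose_mat P * A * P) = transpose_mat P * A * P"
proof -
  have "transpose_mat (transpose_mat P * A * P) = transpose_mat P * transpose_mat (transpose_mat P * A)"
    by (rule transpose_mult[of "transpose_mat P * A" m n P m]) (use assms in auto)
  also have "transpose_mat (transpose_mat P * A) = A * P"
    using assms by (subst transpose_mult[of _ m n]) auto
  finally show ?thesis
    using assms by (simp add: assoc_mult_mat[of _ m n _ n _ m])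
qed

definition block_diag_mat :: "'a::zero mat \<Rightarrow> 'a mat \<Rightarrow> 'a mat" where
  "block_diag_mat A B = four_block_mat A (0\<^sub>m (dim_row A) (dim_col B)) (0\<^sub>m (dim_row B) (dim_col A)) B"

lemma block_diag_mat_carrier:
  "A \<in> carrier_mat a a \<Longrightarrow> B \<in> carrier_mat b b \<Longrightarrow> block_diag_mat A B \<in> carrier_mat (a + b) (a + b)"
  unfolding block_diag_mat_def by auto

lemma transpose_block_diag_mat:
  "A \<in> carrier_mat a a \<Longrightarrow> B \<in> carrier_mat b b \<Longrightarrow>
    transpose_mat (block_diag_mat A B) = block_diag_mat (transpose_mat A) (transpose_mat B)"
  unfolding block_diag_mat_def by (subst transpose_four_block_mat) auto

lemma mult_block_diag_mat:
  fixes A1 B1 :: "'a::semiring_0 mat"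
  assumes "A1 \<in> carrier_mat a a" "B1 \<in> carrier_mat a a" "A2 \<in> carrier_mat b b" "B2 \<in> carrier_mat b b"
  shows "block_diag_mat A1 A2 * block_diag_mat B1 B2 = block_diag_mat (A1 * B1) (A2 * B2)"
  using assms unfolding block_diag_mat_def
  by (subst mult_four_block_mat[of _ a a _ b _ b]) auto

lemma diagonal_block_diag_mat:
  assumes "A \<in> carrier_mat a a" "B \<in> carrier_mat b b" "diagonal_mat A" "diagonal_mat B"
  shows "diagonal_mat (block_diag_mat A B)"
  using assms unfolding block_diag_mat_def diagonal_mat_def by auto

lemma orthogonal_mats_block_diag:
  assumes "P \<in> orthogonal_mats a" "Q \<in> orthogonal_mats b"
  shows "block_diag_mat P Q \<in> orthogonal_mats (a + b)"
  using orthogonal_matsD[OF assms(1)] orthogonal_matsD[OF assms(2)]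
  by (simp add: orthogonal_mats_def block_diag_mat_carrier transpose_block_diag_mat mult_block_diag_mat)
    (simp add: block_diag_mat_def)

section \<open>Orthogonal diagonalisation of real symmetric matrices\<close>

lemma conjugate_of_real_mat_mult_vec:
  fixes A :: "real mat" and v :: "complex vec"
  assumes "A \<in> carrier_mat n m" "v \<in> carrier_vec m"
  shows "conjugate (map_mat complex_of_real A *\<^sub>v v) = map_mat complex_of_real A *\<^sub>v conjugate v"
  using assms by (intro eq_vecI) (auto simp: scalar_prod_def sum_conjugate)

lemma of_real_sym_mat_eigenvalue_real:
  fixes A :: "real mat"
  assumes A: "A \<in> carrier_mat n n" and sym: "transpose_mat A = A"
    and ev: "eigenvalue (map_mat complex_of_real A) z"
  shows "z \<in> \<real>"
proof -
  let ?A = "map_mat complex_of_real A"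
  have A': "?A \<in> carrier_mat n n" using A by simp
  from ev obtain v where v: "v \<in> carrier_vec n" "v \<noteq> 0\<^sub>v n" and Av: "?A *\<^sub>v v = z \<cdot>\<^sub>v v"
    unfolding eigenvalue_def eigenvector_def using A by auto
  have "z * (v \<bullet>c v) = (?A *\<^sub>v v) \<bullet>c v"
    using v by (simp add: Av)
  also have "\<dots> = v \<bullet> (transpose_mat ?A *\<^sub>v conjugate v)"
    using transpose_vec_mult_scalar[of "transpose_mat ?A" n n "conjugate v" v] A' v by simp
  also have "\<dots> = v \<bullet>c (?A *\<^sub>v v)"
    using A v sym by (simp add: map_mat_transpose conjugate_of_real_mat_mult_vec)
  also have "\<dots> = cnj z * (v \<bullet>c v)"
    using v by (simp add: Av conjugate_smult_vec)
  finally have "z = cnj z"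
    using v by simp
  then show ?thesis using Reals_cnj_iff by metis
qed

lemma sym_mat_has_eigenvalue:
  fixes A :: "real mat"
  assumes A: "A \<in> carrier_mat n n" and sym: "transpose_mat A = A" and "0 < n"
  obtains e where "eigenvalue A e"
proof -
  let ?A = "map_mat complex_of_real A"
  have cp: "char_poly ?A = map_poly complex_of_real (char_poly A)"
    by (rule of_real_hom.char_poly_hom[OF A])
  have "degree (char_poly A) = n"
    using degree_monic_char_poly[OF A] by simp
  then have "\<not> constant (poly (char_poly ?A))"
    using \<open>0 < n\<close> by (simp add: cp constant_degree)
  then obtain z where z: "poly (char_poly ?A) z = 0"
    using fundamental_theorem_of_algebra by blast
  then have "z \<in> \<real>"
    using A by (intro of_real_sym_mat_eigenvalue_real[OF A sym]) (simp add: eigenvalue_root_char_poly)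
  then obtain e where "z = complex_of_real e"
    by (auto elim: Reals_cases)
  with z have "poly (char_poly A) e = 0"
    by (simp add: cp)
  then show ?thesis
    using that eigenvalue_root_char_poly[OF A] by blast
qed

definition vec_normalize :: "real vec \<Rightarrow> real vec" where
  "vec_normalize v = (1 / sqrt (v \<bullet> v)) \<cdot>\<^sub>v v"

lemma vec_normalize_scalar_prod:
  assumes "v \<in> carrier_vec n" "w \<in> carrier_vec n"
  shows "vec_normalize v \<bullet> vec_normalize w = (v \<bullet> w) / (sqrt (v \<bullet> v) * sqrt (w \<bullet> w))"
  using assms unfolding vec_normalize_def
  by (simp add: smult_scalar_prod_distrib scalar_prod_smult_distrib)

lemma vec_normalize_self:
  assumes "v \<in> carrier_vec n" "v \<noteq> 0\<^sub>v n"
  shows "vec_normalize v \<bullet> vec_normalize v = 1"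
proof -
  have "0 < v \<bullet> v"
    using conjugate_square_greater_0_vec[OF assms(1)] assms(2) by simp
  then show ?thesis
    using assms(1) by (simp add: vec_normalize_scalar_prod real_sqrt_mult[symmetric])
qed

lemma orthogonal_mat_of_normalized_cols:
  assumes ws: "set ws \<subseteq> carrier_vec n" and orth: "corthogonal ws" and len: "length ws = n"
  shows "mat_of_cols n (map vec_normalize ws) \<in> orthogonal_mats n"
proof -
  let ?W = "mat_of_cols n (map vec_normalize ws)"
  have wsi: "ws ! i \<in> carrier_vec n" if "i < n" for i
    using that ws len by auto
  have col: "col ?W i = vec_normalize (ws ! i)" if "i < n" for i
    using that wsi len unfolding vec_normalize_def by (subst col_mat_of_cols) auto
  have "col ?W i \<bullet> col ?W j = 1\<^sub>m n $$ (i, j)" if i: "i < n" and j: "j < n" for i j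
  proof (cases "i = j")
    case True
    have "ws ! i \<noteq> 0\<^sub>v n"
      using corthogonalD[OF orth, of i i] len i by auto
    with True i show ?thesis
      using vec_normalize_self[OF wsi[OF i]] by (simp add: col)
  next
    case False
    then show ?thesis
      using corthogonalD[OF orth, of i j] vec_normalize_scalar_prod[OF wsi[OF i] wsi[OF j]] i j len
      by (simp add: col)
  qed
  then have "transpose_mat ?W * ?W = 1\<^sub>m n"
    using len by (intro eq_matI) auto
  then show ?thesis
    using len mat_of_cols_carrier(1)[of n "map vec_normalize ws"] unfolding orthogonal_mats_def by simp
qed

lemma orthogonal_completion:
  assumes v: "v \<in> carrier_vec n" and v0: "v \<noteq> 0\<^sub>v n"
  obtains W where "W \<in> orthogonal_mats n" "col W 0 = vec_normalize v"
proof -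
  interpret cof_vec_space n "TYPE(real)" .
  define ws where "ws = gram_schmidt n (basis_completion v)"
  note b = basis_completion[OF v v0]
  note gs = gram_schmidt_result[OF b(2) b(4) b(5) ws_def]
  have "0 < n"
    using v v0 by (cases n) auto
  then obtain vs where "basis_completion v = v # vs"
    using b(6,7) by (cases "basis_completion v") auto
  then have "hd ws = v"
    using gram_schmidt_hd[OF v] unfolding ws_def by simp
  moreover have "ws \<noteq> []"
    using gs(4) b(6) \<open>0 < n\<close> by auto
  ultimately have "ws ! 0 = v"
    by (simp add: hd_conv_nth)
  then have "col (mat_of_cols n (map vec_normalize ws)) 0 = vec_normalize v"
    using gs(3,4) b(6) \<open>0 < n\<close> v unfolding vec_normalize_def by (subst col_mat_of_cols) auto
  moreover have "mat_of_cols n (map vec_normalize ws) \<in> orthogonal_mats n"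
    using gs b(6) by (intro orthogonal_mat_of_normalized_cols) auto
  ultimately show ?thesis using that by blast
qed

lemma sym_mat_split_first_eigenvector:
  fixes B :: "'a::comm_ring_1 mat"
  assumes B: "B \<in> carrier_mat (Suc m) (Suc m)" and sym: "transpose_mat B = B"
    and col0: "B *\<^sub>v unit_vec (Suc m) 0 = e \<cdot>\<^sub>v unit_vec (Suc m) 0"
  obtains B' where "B' \<in> carrier_mat m m" "transpose_mat B' = B'"
    "B = block_diag_mat (mat 1 1 (\<lambda>_. e)) B'"
proof -
  define B' where "B' = mat m m (\<lambda>(i, j). B $$ (Suc i, Suc j))"
  have B_sym: "B $$ (i, j) = B $$ (j, i)" if "i < Suc m" "j < Suc m" for i j
    using arg_cong[OF sym, of "\<lambda>M. M $$ (j, i)"] B that by simp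
  have first_col: "B $$ (i, 0) = (if i = 0 then e else 0)" if "i < Suc m" for i
    using arg_cong[OF col0, of "\<lambda>v. v $ i"] B that by simp
  have "B = block_diag_mat (mat 1 1 (\<lambda>_. e)) B'"
    by (rule eq_matI) (use B first_col B_sym in \<open>auto simp: block_diag_mat_def B'_def\<close>)
  moreover have "B' \<in> carrier_mat m m" "transpose_mat B' = B'"
    using B_sym unfolding B'_def by (auto intro!: eq_matI)
  ultimately show ?thesis
    using that by blast
qed

lemma orthogonal_congruence_eigenvector:
  assumes W: "W \<in> orthogonal_mats n" and A: "A \<in> carrier_mat n n" and "0 < n"
    and Aw: "A *\<^sub>v col W 0 = e \<cdot>\<^sub>v col W 0"
  shows "(transpose_mat W * A * W) *\<^sub>v unit_vec n 0 = e \<cdot>\<^sub>v unit_vec n 0"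
proof -
  note W' = orthogonal_matsD[OF W]
  have We: "W *\<^sub>v unit_vec n 0 = col W 0"
    by (rule eq_vecI) (use W'(1) \<open>0 < n\<close> in auto)
  have "(transpose_mat W * A * W) *\<^sub>v unit_vec n 0 = transpose_mat W *\<^sub>v (A *\<^sub>v col W 0)"
    using W'(1) A by (simp add: assoc_mult_mat_vec[of _ n n _ n] We[symmetric])
  also have "\<dots> = e \<cdot>\<^sub>v (transpose_mat W *\<^sub>v (W *\<^sub>v unit_vec n 0))"
    using W'(1) by (simp add: Aw We mult_mat_vec[of _ n n] carrier_vecI)
  also have "transpose_mat W *\<^sub>v (W *\<^sub>v unit_vec n 0) = unit_vec n 0"
    using W' by (simp add: assoc_mult_mat_vec[symmetric, of _ n n _ n])
  finally show ?thesis .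
qed

lemma congruence_block_diag_mat:
  fixes A W :: "'a::comm_ring_1 mat"
  assumes W: "W \<in> carrier_mat (a + b) (a + b)" and A: "A \<in> carrier_mat (a + b) (a + b)"
    and C: "C \<in> carrier_mat a a" and B: "B \<in> carrier_mat b b" and P: "P \<in> carrier_mat b b"
    and WAW: "transpose_mat W * A * W = block_diag_mat C B"
  shows "transpose_mat (W * block_diag_mat (1\<^sub>m a) P) * A * (W * block_diag_mat (1\<^sub>m a) P)
    = block_diag_mat C (transpose_mat P * B * P)"
proof -
  let ?E = "block_diag_mat (1\<^sub>m a) P"
  have E: "?E \<in> carrier_mat (a + b) (a + b)"
    using P by (simp add: block_diag_mat_carrier)
  have "transpose_mat (W * ?E) = transpose_mat ?E * transpose_mat W"
    by (rule transpose_mult[OF W E])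
  then have "transpose_mat (W * ?E) * A * (W * ?E) = transpose_mat ?E * (transpose_mat W * A * W) * ?E"
    using W E A by (simp add: assoc_mult_mat[of _ "a + b" "a + b" _ "a + b" _ "a + b"])
  also have "\<dots> = block_diag_mat C (transpose_mat P * B * P)"
    unfolding WAW using C B P
    by (simp add: transpose_block_diag_mat[of _ a _ b] mult_block_diag_mat[of _ a _ _ b])
  finally show ?thesis .
qed

theorem sym_mat_orthogonal_diagonalization:
  fixes A :: "real mat"
  assumes "A \<in> carrier_mat n n" "transpose_mat A = A"
  obtains P D where "P \<in> orthogonal_mats n" "D \<in> carrier_mat n n" "diagonal_mat D"
    "transpose_mat P * A * P = D"
  using assms
proof (induction n arbitrary: A thesis)
  case 0
  show ?case
    by (rule "0.prems"(1)[of "1\<^sub>m 0" A]) (use "0.prems" in \<open>auto simp: one_mat_orthogonal diagonal_mat_def\<close>)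
next
  case (Suc m)
  note A = Suc.prems(2) and sym = Suc.prems(3)
  obtain e where "eigenvalue A e"
    using sym_mat_has_eigenvalue[OF A sym] by blast
  then obtain v where v: "v \<in> carrier_vec (Suc m)" "v \<noteq> 0\<^sub>v (Suc m)" and Av: "A *\<^sub>v v = e \<cdot>\<^sub>v v"
    unfolding eigenvalue_def eigenvector_def using A by auto
  obtain W where W: "W \<in> orthogonal_mats (Suc m)" and W0: "col W 0 = vec_normalize v"
    using orthogonal_completion[OF v] by blast
  note W' = orthogonal_matsD[OF W]
  have "A *\<^sub>v col W 0 = e \<cdot>\<^sub>v col W 0"
    using A v Av unfolding W0 vec_normalize_def by (simp add: mult_mat_vec smult_smult_assoc mult.commute)
  then have "(transpose_mat W * A * W) *\<^sub>v unit_vec (Suc m) 0 = e \<cdot>\<^sub>v unit_vec (Suc m) 0"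
    by (intro orthogonal_congruence_eigenvector[OF W A]) auto
  moreover have "transpose_mat W * A * W \<in> carrier_mat (Suc m) (Suc m)"
    using W'(1) A by simp
  ultimately obtain B where B: "B \<in> carrier_mat m m" "transpose_mat B = B"
    and WAW: "transpose_mat W * A * W = block_diag_mat (mat 1 1 (\<lambda>_. e)) B"
    using sym_mat_split_first_eigenvector congruence_preserves_sym[OF A W'(1) sym] by metis
  obtain P D where P: "P \<in> orthogonal_mats m" and D: "D \<in> carrier_mat m m" "diagonal_mat D"
    and PBP: "transpose_mat P * B * P = D"
    using Suc.IH[OF _ B] by blast
  have "transpose_mat (W * block_diag_mat (1\<^sub>m 1) P) * A * (W * block_diag_mat (1\<^sub>m 1) P)
      = block_diag_mat (mat 1 1 (\<lambda>_. e)) (transpose_mat P * B * P)"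
    by (rule congruence_block_diag_mat) (use W'(1) A B orthogonal_matsD(1)[OF P] WAW in auto)
  then have "transpose_mat (W * block_diag_mat (1\<^sub>m 1) P) * A * (W * block_diag_mat (1\<^sub>m 1) P)
      = block_diag_mat (mat 1 1 (\<lambda>_. e)) D"
    unfolding PBP .
  moreover have "W * block_diag_mat (1\<^sub>m 1) P \<in> orthogonal_mats (Suc m)"
    using orthogonal_mats_mult[OF W] orthogonal_mats_block_diag[OF one_mat_orthogonal[of 1] P] by simp
  moreover have "block_diag_mat (mat 1 1 (\<lambda>_. e)) D \<in> carrier_mat (Suc m) (Suc m)"
    using block_diag_mat_carrier[of "mat 1 1 (\<lambda>_. e)" 1 D m] D by simp
  moreover have "diagonal_mat (block_diag_mat (mat 1 1 (\<lambda>_. e)) D)"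
    by (rule diagonal_block_diag_mat[of _ 1 _ m]) (use D in \<open>auto simp: diagonal_mat_def\<close>)
  ultimately show ?case
    using Suc.prems(1) by blast
qed

section \<open>Quadratic forms\<close>

lemma mat_kernel_nontrivial:
  fixes A :: "'a::field mat"
  assumes A: "A \<in> carrier_mat nr nc" and wide: "nr < nc"
  obtains v where "v \<in> carrier_vec nc" "v \<noteq> 0\<^sub>v nc" "A *\<^sub>v v = 0\<^sub>v nr"
proof -
  obtain C where gj: "gauss_jordan_single A = C" by auto
  from gauss_jordan_single[OF A gj] obtain P Q where CPA: "C = P * A" and QP: "Q * P = 1\<^sub>m nr"
    and P: "P \<in> carrier_mat nr nr" and Q: "Q \<in> carrier_mat nr nr" and C: "C \<in> carrier_mat nr nc"
    and ref: "row_echelon_form C" by auto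
  note base = find_base_vectors[OF ref C]
  have "card {i. i < nr \<and> row C i \<noteq> 0\<^sub>v nc} \<le> card {..<nr}"
    by (rule card_mono) auto
  then have "card (set (find_base_vectors C)) > 0"
    using base(4) wide by auto
  then obtain v where v: "v \<in> set (find_base_vectors C)"
    by (metis card.empty ex_in_conv less_irrefl)
  have "mat_kernel C = mat_kernel A"
    unfolding CPA by (rule mat_kernel_mult_eq[OF A P Q QP])
  with base(1) v have "v \<in> mat_kernel A" by auto
  moreover have "v \<noteq> 0\<^sub>v nc" using base(2) v by metis
  ultimately show ?thesis
    using that mat_kernelD[OF A] by blast
qed

lemma exists_nonzero_orthogonal_vec:
  fixes rs :: "'a::field vec list"
  assumes rs: "set rs \<subseteq> carrier_vec n" and few: "length rs < n"
  obtains w where "w \<in> carrier_vec n" "w \<noteq> 0\<^sub>v n" "\<forall>r\<in>set rs. r \<bullet> w = 0"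
proof -
  obtain w where w: "w \<in> carrier_vec n" "w \<noteq> 0\<^sub>v n" and Mw: "mat_of_rows n rs *\<^sub>v w = 0\<^sub>v (length rs)"
    using mat_kernel_nontrivial[OF mat_of_rows_carrier(1) few] by blast
  have "r \<bullet> w = 0" if "r \<in> set rs" for r
  proof -
    from that obtain j where j: "j < length rs" "r = rs ! j"
      by (auto simp: in_set_conv_nth)
    then have "rs ! j \<in> carrier_vec n"
      using rs by auto
    then show ?thesis
      using arg_cong[OF Mw, of "\<lambda>x. x $ j"] j by simp
  qed
  then show ?thesis
    using that w by blast
qed

lemma quadratic_form_congruence:
  fixes A P :: "'a::comm_ring_1 mat"
  assumes A: "A \<in> carrier_mat n n" and P: "P \<in> carrier_mat n m" and w: "w \<in> carrier_vec m"
  shows "(P *\<^sub>v w) \<bullet> (A *\<^sub>v (P *\<^sub>v w)) = w \<bullet> ((transpose_mat P * A * P) *\<^sub>v w)"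
proof -
  have "(transpose_mat P * A * P) *\<^sub>v w = (transpose_mat P * A) *\<^sub>v (P *\<^sub>v w)"
    by (rule assoc_mult_mat_vec) (use A P w in auto)
  also have "\<dots> = transpose_mat P *\<^sub>v (A *\<^sub>v (P *\<^sub>v w))"
    by (rule assoc_mult_mat_vec) (use A P w in auto)
  finally have "w \<bullet> ((transpose_mat P * A * P) *\<^sub>v w) = (transpose_mat P *\<^sub>v (A *\<^sub>v (P *\<^sub>v w))) \<bullet> w"
    using A P w by (simp add: comm_scalar_prod[of w m])
  also have "\<dots> = (P *\<^sub>v w) \<bullet> (A *\<^sub>v (P *\<^sub>v w))"
    using transpose_vec_mult_scalar[OF P w, of "A *\<^sub>v (P *\<^sub>v w)"] A P w
    by (simp add: comm_scalar_prod[of "P *\<^sub>v w" n])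
  finally show ?thesis ..
qed

lemma diagonal_quadratic_form:
  fixes D :: "'a::comm_ring_1 mat"
  assumes D: "D \<in> carrier_mat n n" "diagonal_mat D" and w: "w \<in> carrier_vec n"
  shows "w \<bullet> (D *\<^sub>v w) = (\<Sum>i<n. D $$ (i, i) * (w $ i)\<^sup>2)"
proof -
  have Dw: "(D *\<^sub>v w) $ i = D $$ (i, i) * w $ i" if i: "i < n" for i
  proof -
    have "(D *\<^sub>v w) $ i = (\<Sum>j = 0..<n. D $$ (i, j) * w $ j)"
      using D w i by (simp add: scalar_prod_def)
    also have "\<dots> = (\<Sum>j = 0..<n. if j = i then D $$ (i, i) * w $ i else 0)"
      by (rule sum.cong) (use D i in \<open>auto simp: diagonal_mat_def\<close>)
    finally show ?thesis
      using i by simp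
  qed
  have "w \<bullet> (D *\<^sub>v w) = (\<Sum>i = 0..<n. w $ i * (D *\<^sub>v w) $ i)"
    using w D(1) by (simp add: scalar_prod_def del: index_mult_mat_vec)
  also have "\<dots> = (\<Sum>i<n. D $$ (i, i) * (w $ i)\<^sup>2)"
    by (auto simp: Dw power2_eq_square lessThan_atLeast0 intro!: sum.cong)
  finally show ?thesis .
qed

lemma diagonal_quadratic_form_neg:
  fixes D :: "real mat"
  assumes D: "D \<in> carrier_mat n n" "diagonal_mat D" and w: "w \<in> carrier_vec n" "w \<noteq> 0\<^sub>v n"
    and supp: "\<forall>i<n. w $ i \<noteq> 0 \<longrightarrow> D $$ (i, i) < 0"
  shows "w \<bullet> (D *\<^sub>v w) < 0"
proof -
  obtain i where i: "i < n" "w $ i \<noteq> 0"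
    using w by (metis carrier_vecD eq_vecI index_zero_vec(1,2))
  have "0 < (\<Sum>i<n. - (D $$ (i, i) * (w $ i)\<^sup>2))"
  proof (rule sum_pos2[of _ i])
    show "0 \<le> - (D $$ (j, j) * (w $ j)\<^sup>2)" if "j \<in> {..<n}" for j
      using supp that by (cases "w $ j = 0") (auto simp: mult_nonpos_nonneg)
  qed (use i supp in \<open>auto simp: mult_neg_pos\<close>)
  then show ?thesis
    using diagonal_quadratic_form[OF D w(1)] by (simp add: sum_negf)
qed

lemma pick_lessThan:
  assumes "i < k"
  shows "pick {..<k} i = i"
proof -
  have "{a \<in> {..<k}. a < i} = {..<i}"
    using assms by auto
  then show ?thesis
    using pick_card_in_set[of i "{..<k}"] assms by simp
qed

lemma quadratic_form_leading_submatrix: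
  fixes A :: "'a::comm_ring_1 mat"
  assumes A: "A \<in> carrier_mat n n" and "k \<le> n" and v: "v \<in> carrier_vec n"
    and tail: "\<forall>j\<in>{k..<n}. v $ j = 0"
  shows "v \<bullet> (A *\<^sub>v v) = vec k (($) v) \<bullet> (submatrix A {..<k} {..<k} *\<^sub>v vec k (($) v))"
proof -
  let ?B = "submatrix A {..<k} {..<k}"
  have lead: "{i. i < n \<and> i \<in> {..<k}} = {..<k}"
    using \<open>k \<le> n\<close> by auto
  have B: "?B \<in> carrier_mat k k"
    unfolding carrier_mat_def using A lead by (simp add: dim_submatrix)
  have Bv: "(?B *\<^sub>v vec k (($) v)) $ i = (\<Sum>j = 0..<k. A $$ (i, j) * v $ j)" if i: "i < k" for i
  proof -
    have "?B $$ (i, j) = A $$ (i, j)" if "j < k" for j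
      using submatrix_index[of i A "{..<k}" j "{..<k}"] i that A lead by (simp add: pick_lessThan)
    then show ?thesis
      using B i by (simp add: scalar_prod_def)
  qed
  have inner: "(\<Sum>j = 0..<n. A $$ (i, j) * v $ j) = (\<Sum>j = 0..<k. A $$ (i, j) * v $ j)" for i
    by (rule sum.mono_neutral_right) (use tail \<open>k \<le> n\<close> in auto)
  have "vec k (($) v) \<bullet> (?B *\<^sub>v vec k (($) v)) = (\<Sum>i = 0..<k. v $ i * (\<Sum>j = 0..<k. A $$ (i, j) * v $ j))"
    using B by (simp add: scalar_prod_def Bv del: index_mult_mat_vec)
  also have "\<dots> = (\<Sum>i = 0..<n. v $ i * (\<Sum>j = 0..<n. A $$ (i, j) * v $ j))"
    unfolding inner by (rule sum.mono_neutral_right[symmetric]) (use tail \<open>k \<le> n\<close> in auto)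
  also have "\<dots> = v \<bullet> (A *\<^sub>v v)"
    using A v by (simp add: scalar_prod_def)
  finally show ?thesis ..
qed

lemma neg_quadratic_form_vanishing_tail:
  fixes A P D :: "real mat"
  assumes P: "P \<in> orthogonal_mats n" and A: "A \<in> carrier_mat n n"
    and D: "D \<in> carrier_mat n n" "diagonal_mat D" and PAP: "transpose_mat P * A * P = D"
    and many_neg: "n - k < card {i. i < n \<and> D $$ (i, i) < 0}"
  obtains v where "v \<in> carrier_vec n" "\<forall>j\<in>{k..<n}. v $ j = 0" "v \<bullet> (A *\<^sub>v v) < 0"
proof -
  define S where "S = {i. i < n \<and> D $$ (i, i) < 0}"
  text \<open>\<open>w \<bottom> row P j\<close> for \<open>j \<ge> k\<close> makes \<open>P w\<close> vanish beyond \<open>k\<close>; \<open>w \<bottom> e\<^sub>i\<close> for \<open>i \<notin> S\<close>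
    confines \<open>w\<close> to the coordinates where \<open>D\<close> is negative. These are fewer than \<open>n\<close> constraints.\<close>
  define rs where "rs = map (row P) [k..<n] @ map (unit_vec n) (filter (\<lambda>i. i \<notin> S) [0..<n])"
  have "length (filter (\<lambda>i. i \<notin> S) [0..<n]) = card ({..<n} - S)"
    unfolding length_filter_conv_card by (intro arg_cong[where f = card]) auto
  also have "\<dots> = n - card S"
    by (subst card_Diff_subset) (auto simp: S_def)
  moreover have "card S \<le> n"
    using card_mono[of "{..<n}" S] by (auto simp: S_def)
  ultimately have "length rs < n"
    using many_neg unfolding rs_def S_def by simp
  moreover have "set rs \<subseteq> carrier_vec n"
    using orthogonal_matsD(1)[OF P] unfolding rs_def by auto
  ultimately obtain w where w: "w \<in> carrier_vec n" "w \<noteq> 0\<^sub>v n" and orth: "\<forall>r\<in>set rs. r \<bullet> w = 0"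
    using exists_nonzero_orthogonal_vec by blast
  have "w $ i = 0" if "i < n" "i \<notin> S" for i
  proof -
    have "unit_vec n i \<in> set rs"
      using that unfolding rs_def by auto
    then show ?thesis
      using orth w that by auto
  qed
  then have "\<forall>i<n. w $ i \<noteq> 0 \<longrightarrow> D $$ (i, i) < 0"
    unfolding S_def by blast
  then have "(P *\<^sub>v w) \<bullet> (A *\<^sub>v (P *\<^sub>v w)) < 0"
    using quadratic_form_congruence[OF A orthogonal_matsD(1)[OF P] w(1)] PAP
      diagonal_quadratic_form_neg[OF D w] by simp
  moreover have "\<forall>j\<in>{k..<n}. (P *\<^sub>v w) $ j = 0"
    using orth orthogonal_matsD(1)[OF P] unfolding rs_def by auto
  ultimately show ?thesis
    using that[of "P *\<^sub>v w"] orthogonal_matsD(1)[OF P] w(1) by simp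
qed

theorem proposition2:
  fixes n k :: nat and A :: "real mat"
  assumes "2 \<le> k" and "k \<le> n"
    and "A \<in> k_psd_closure n k"
  shows "num_neg_eigenvalues A \<le> n - k"
proof -
  have A: "A \<in> carrier_mat n n" "transpose_mat A = A" and lead: "psd (submatrix A {..<k} {..<k})"
    using assms(2,3) unfolding k_psd_closure_def by auto
  obtain P D where P: "P \<in> orthogonal_mats n" and D: "D \<in> carrier_mat n n" "diagonal_mat D"
    and PAP: "transpose_mat P * A * P = D"
    using sym_mat_orthogonal_diagonalization[OF A] by blast
  have "num_neg_eigenvalues A = card {i. i < n \<and> D $$ (i, i) < 0}"
    using num_neg_eigenvalues_similar_diagonal[OF _ D] orthogonal_congruence_similar[OF P A(1)] PAP by simp
  moreover have "\<not> n - k < card {i. i < n \<and> D $$ (i, i) < 0}"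
  proof
    assume "n - k < card {i. i < n \<and> D $$ (i, i) < 0}"
    then obtain v where v: "v \<in> carrier_vec n" "\<forall>j\<in>{k..<n}. v $ j = 0" and neg: "v \<bullet> (A *\<^sub>v v) < 0"
      using neg_quadratic_form_vanishing_tail[OF P A(1) D PAP] by blast
    have "dim_row (submatrix A {..<k} {..<k}) = k"
      using A(1) assms(2) by (simp add: dim_submatrix Collect_conj_eq Int_absorb1 lessThan_def[symmetric])
    then have "0 \<le> v \<bullet> (A *\<^sub>v v)"
      using lead quadratic_form_leading_submatrix[OF A(1) assms(2) v] unfolding psd_def by simp
    with neg show False by simp
  qed
  ultimately show ?thesis by simp
qed

end
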